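(* For a commutative ring $R$ the following are equivalent: (i) $T(R)$ is zero-dimensional; (ii) for each $f\in R$ there exists $n\geq 1$ with $\operatorname{Ann}(f^n)=\operatorname{Ann}(f^{n+1})$, and there exists $h\in\operatorname{Ann}(f^n)$ such that $\operatorname{Ann}(f^n)\cap\operatorname{Ann}(h)=0$; (iii) for each $f\in R$ there exist $n\geq 1$ and a non-zero-divisor $g\in R$ such that $f^n g=f^{2n}$.
   Context: $T(R)=S^{-1}R$ with $S$ the set of non-zero-divisors of $R$ is the total ring of fractions. Zero-dimensional means Krull dimension $0$ (every prime ideal is maximal). *)

theory Defs
  imports "HOL-Algebra.Algebra"
begin

definition ann :: "('a, 'b) ring_scheme \<Rightarrow> 'a \<Rightarrow> 'a set" where
  "ann R x = {y \<in> carrier R. y \<otimes>\<^bsub>R\<^esub> x = \<zero>\<^bsub>R\<^esub>}"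

definition nzd :: "('a, 'b) ring_scheme \<Rightarrow> 'a set" where
  "nzd R = {s \<in> carrier R. \<forall>y \<in> carrier R. s \<otimes>\<^bsub>R\<^esub> y = \<zero>\<^bsub>R\<^esub> \<longrightarrow> y = \<zero>\<^bsub>R\<^esub>}"

definition frac_rel :: "('a, 'b) ring_scheme \<Rightarrow> (('a \<times> 'a) \<times> ('a \<times> 'a)) set" where
  "frac_rel R = {((a, s), (b, t)). a \<in> carrier R \<and> s \<in> nzd R \<and> b \<in> carrier R \<and> t \<in> nzd R \<and>
      (\<exists>u \<in> nzd R. u \<otimes>\<^bsub>R\<^esub> (a \<otimes>\<^bsub>R\<^esub> t \<ominus>\<^bsub>R\<^esub> b \<otimes>\<^bsub>R\<^esub> s) = \<zero>\<^bsub>R\<^esub>)}"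

text \<open>The total ring of fractions T(R) = S^{-1}R, elements are equivalence classes of pairs
  (a, s) standing for a/s; operations are defined on representatives.\<close>
definition frac_mult :: "('a, 'b) ring_scheme \<Rightarrow> ('a \<times> 'a) set \<Rightarrow> ('a \<times> 'a) set \<Rightarrow> ('a \<times> 'a) set" where
  "frac_mult R A B = (\<Union>x\<in>A. \<Union>y\<in>B.
     frac_rel R `` {(fst x \<otimes>\<^bsub>R\<^esub> fst y, snd x \<otimes>\<^bsub>R\<^esub> snd y)})"

definition frac_add :: "('a, 'b) ring_scheme \<Rightarrow> ('a \<times> 'a) set \<Rightarrow> ('a \<times> 'a) set \<Rightarrow> ('a \<times> 'a) set" where
  "frac_add R A B = (\<Union>x\<in>A. \<Union>y\<in>B.
     frac_rel R `` {(fst x \<otimes>\<^bsub>R\<^esub> snd y \<oplus>\<^bsub>R\<^esub> fst y \<otimes>\<^bsub>R\<^esub> snd x, snd x \<otimes>\<^bsub>R\<^esub> snd y)})"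

definition total_frac_ring :: "('a, 'b) ring_scheme \<Rightarrow> ('a \<times> 'a) set ring" where
  "total_frac_ring R =
    \<lparr>carrier = (carrier R \<times> nzd R) // frac_rel R,
      monoid.mult = frac_mult R,
      monoid.one = frac_rel R `` {(\<one>\<^bsub>R\<^esub>, \<one>\<^bsub>R\<^esub>)},
      ring.zero = frac_rel R `` {(\<zero>\<^bsub>R\<^esub>, \<one>\<^bsub>R\<^esub>)},
      ring.add = frac_add R\<rparr>"

text \<open>Zero-dimensional: Krull dimension 0, i.e. every prime ideal is maximal.\<close>
definition zero_dimensional :: "('a, 'b) ring_scheme \<Rightarrow> bool" where
  "zero_dimensional S \<longleftrightarrow> (\<forall>P. primeideal P S \<longrightarrow> maximalideal P S)"

end

theory Submission
  imports Defs
begin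

text \<open>
  A commutative ring is zero-dimensional iff every x satisfies x^n = x^(n+1) y for some n and y.
  Given such an identity, x^n (1 - x y) = 0 puts 1 - x y into every prime ideal not containing x,
  so x is invertible modulo it. Without one, the multiplicative set of all x^n (1 - x y) avoids 0;
  a prime ideal disjoint from it contains neither x nor any 1 - x r, so it is not maximal.

  For T(R), whose elements are fractions f/s, this condition amounts to: every f in R satisfies
  f^n t = f^(n+1) a with t a non-zero-divisor. Such an identity gives Ann(f^n) = Ann(f^(n+1));
  for N = n + 1 and F = f^N it iterates to F t^N = F^2 a^N, and h = t^N - F a^N witnesses (ii).
  Conversely, under (ii) g = f^n + h is a non-zero-divisor with f^n g = f^(2n), and (iii) is an
  identity of the above form.
\<close>

section \<open>Non-zero-divisors and annihilators\<close>

lemma (in comm_monoid) nat_pow_mult_shift: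
  assumes x: "x \<in> carrier G" and t: "t \<in> carrier G" and a: "a \<in> carrier G"
    and eq: "x [^] n \<otimes> t = x [^] Suc n \<otimes> a"
  shows "x [^] n \<otimes> t [^] k = x [^] (n + k) \<otimes> a [^] (k::nat)"
proof (induction k)
  case 0
  show ?case
    using x by simp
next
  case (Suc k)
  have "x [^] n \<otimes> t [^] Suc k = (x [^] n \<otimes> t [^] k) \<otimes> t"
    using x t by (simp add: m_assoc)
  also have "\<dots> = (x [^] n \<otimes> t) \<otimes> (x [^] k \<otimes> a [^] k)"
    using x t a by (simp add: Suc nat_pow_mult[symmetric] m_ac)
  also have "\<dots> = x [^] (n + Suc k) \<otimes> a [^] Suc k"
    using x a by (simp add: eq nat_pow_mult[symmetric] m_ac del: nat_pow_Suc)
  finally show ?case .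
qed

context cring
begin

lemma nzd_closed: "s \<in> nzd R \<Longrightarrow> s \<in> carrier R"
  by (simp add: nzd_def)

lemma nzd_cancel: "s \<in> nzd R \<Longrightarrow> y \<in> carrier R \<Longrightarrow> s \<otimes> y = \<zero> \<Longrightarrow> y = \<zero>"
  by (simp add: nzd_def)

lemma nzd_mult_cancel:
  assumes "s \<in> nzd R" "a \<in> carrier R" "b \<in> carrier R"
  shows "s \<otimes> a = s \<otimes> b \<longleftrightarrow> a = b"
proof
  assume "s \<otimes> a = s \<otimes> b"
  then have "s \<otimes> (a \<ominus> b) = \<zero>"
    using assms nzd_closed by (simp add: r_minus a_minus_def r_distr r_neg)
  then have "a \<ominus> b = \<zero>"
    by (rule nzd_cancel[OF assms(1), rotated]) (use assms in simp)
  then show "a = b" using assms by simp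
qed simp

lemma nzd_one: "\<one> \<in> nzd R"
  by (simp add: nzd_def)

lemma nzd_mult:
  assumes "s \<in> nzd R" "t \<in> nzd R"
  shows "s \<otimes> t \<in> nzd R"
proof -
  have "y = \<zero>" if y: "y \<in> carrier R" "s \<otimes> t \<otimes> y = \<zero>" for y
  proof -
    have "s \<otimes> (t \<otimes> y) = \<zero>"
      using y assms nzd_closed by (simp add: m_assoc)
    then have "t \<otimes> y = \<zero>"
      by (rule nzd_cancel[OF assms(1), rotated]) (use y assms(2) nzd_closed in simp)
    then show "y = \<zero>"
      by (rule nzd_cancel[OF assms(2) y(1)])
  qed
  moreover have "s \<otimes> t \<in> carrier R"
    using assms nzd_closed by simp
  ultimately show ?thesis
    unfolding nzd_def by blast
qed

lemma nzd_pow: "s \<in> nzd R \<Longrightarrow> s [^] (n::nat) \<in> nzd R"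
  by (induction n) (auto simp: nzd_one nzd_mult)

lemma nat_pow_double_split:
  assumes "f \<in> carrier R" "n \<ge> 1"
  shows "f [^] (2 * n) = f [^] Suc n \<otimes> f [^] (n - 1)"
proof -
  have "2 * n = Suc n + (n - 1)"
    using assms(2) by simp
  then show ?thesis
    using assms(1) by (simp only: nat_pow_mult)
qed

lemma ann_pow_eq_ann_Suc_pow:
  assumes f: "f \<in> carrier R" and t: "t \<in> nzd R" and a: "a \<in> carrier R"
    and eq: "f [^] n \<otimes> t = f [^] Suc n \<otimes> a"
  shows "ann R (f [^] n) = ann R (f [^] (n + 1))"
proof
  show "ann R (f [^] n) \<subseteq> ann R (f [^] (n + 1))"
    using f by (auto simp: ann_def m_assoc[symmetric])
  show "ann R (f [^] (n + 1)) \<subseteq> ann R (f [^] n)"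
  proof
    fix y assume "y \<in> ann R (f [^] (n + 1))"
    then have y: "y \<in> carrier R" "y \<otimes> f [^] Suc n = \<zero>"
      by (simp_all add: ann_def)
    have "t \<otimes> (y \<otimes> f [^] n) = y \<otimes> (f [^] n \<otimes> t)"
      using f y(1) t nzd_closed by (simp add: m_ac del: nat_pow_Suc)
    also have "\<dots> = (y \<otimes> f [^] Suc n) \<otimes> a"
      using f y(1) a by (simp add: eq m_assoc del: nat_pow_Suc)
    finally have "t \<otimes> (y \<otimes> f [^] n) = \<zero>"
      using y a by simp
    then have "y \<otimes> f [^] n = \<zero>"
      by (rule nzd_cancel[OF t, rotated]) (use y f in simp)
    with y(1) show "y \<in> ann R (f [^] n)"
      by (simp add: ann_def)
  qed
qed

lemma ann_pow_add_subset:
  fixes n k :: nat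
  assumes f: "f \<in> carrier R" and stable: "ann R (f [^] n) = ann R (f [^] (n + 1))"
  shows "ann R (f [^] (n + k)) \<subseteq> ann R (f [^] n)"
proof (induction k)
  case (Suc k)
  have "f [^] k \<otimes> f [^] (n + 1) = f [^] (k + (n + 1))"
    by (rule nat_pow_mult[OF f])
  moreover have "k + (n + 1) = n + Suc k"
    by simp
  ultimately have split_Suc: "f [^] (n + Suc k) = f [^] k \<otimes> f [^] (n + 1)"
    by (simp only:)
  have "f [^] k \<otimes> f [^] n = f [^] (k + n)"
    by (rule nat_pow_mult[OF f])
  then have split: "f [^] (n + k) = f [^] k \<otimes> f [^] n"
    by (simp only: add.commute)
  show ?case
  proof
    fix y assume "y \<in> ann R (f [^] (n + Suc k))"
    then have y: "y \<in> carrier R" "(y \<otimes> f [^] k) \<otimes> f [^] (n + 1) = \<zero>"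
      unfolding split_Suc ann_def using f by (simp_all add: m_assoc del: nat_pow_Suc)
    then have "y \<otimes> f [^] k \<in> ann R (f [^] n)"
      using f stable by (simp add: ann_def del: nat_pow_Suc)
    then have "y \<in> ann R (f [^] (n + k))"
      using f y(1) by (simp add: ann_def split m_assoc)
    with Suc show "y \<in> ann R (f [^] n)"
      by blast
  qed
qed simp

lemma ann_inter_ann_eq_zero:
  assumes F: "F \<in> carrier R" and t: "t \<in> nzd R" and a: "a \<in> carrier R"
    and eq: "F \<otimes> t = F \<otimes> F \<otimes> a"
  shows "t \<ominus> F \<otimes> a \<in> ann R F" "ann R F \<inter> ann R (t \<ominus> F \<otimes> a) = {\<zero>}"
proof -
  have t_R: "t \<in> carrier R"
    using t by (rule nzd_closed)
  have "(t \<ominus> F \<otimes> a) \<otimes> F = F \<otimes> t \<ominus> F \<otimes> F \<otimes> a"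
    using F t_R a by algebra
  then show "t \<ominus> F \<otimes> a \<in> ann R F"
    using F t_R a by (simp add: ann_def eq)
  have "y = \<zero>" if y: "y \<in> carrier R" "y \<otimes> F = \<zero>" "y \<otimes> (t \<ominus> F \<otimes> a) = \<zero>" for y
  proof -
    have "t \<otimes> y = y \<otimes> (t \<ominus> F \<otimes> a) \<oplus> (y \<otimes> F) \<otimes> a"
      using y(1) F t_R a by algebra
    then have "t \<otimes> y = \<zero>"
      using y a by simp
    then show "y = \<zero>"
      by (rule nzd_cancel[OF t y(1)])
  qed
  then show "ann R F \<inter> ann R (t \<ominus> F \<otimes> a) = {\<zero>}"
    using F t_R a by (auto simp: ann_def)
qed

lemma ann_pow_stable_complement:
  assumes f: "f \<in> carrier R" and t: "t \<in> nzd R" and a: "a \<in> carrier R"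
    and eq: "f [^] n \<otimes> t = f [^] Suc n \<otimes> a"
  shows "\<exists>N::nat. N \<ge> 1 \<and> ann R (f [^] N) = ann R (f [^] (N + 1)) \<and>
           (\<exists>h \<in> ann R (f [^] N). ann R (f [^] N) \<inter> ann R h = {\<zero>})"
proof -
  define N where "N = Suc n"
  have t_R: "t \<in> carrier R"
    using t by (rule nzd_closed)
  have "f [^] N \<otimes> t = f \<otimes> (f [^] n \<otimes> t)"
    using f t_R by (simp add: N_def m_ac)
  also have "\<dots> = f \<otimes> (f [^] Suc n \<otimes> a)"
    by (simp only: eq)
  also have "\<dots> = f [^] Suc N \<otimes> a"
    using f a by (simp add: N_def m_ac del: nat_pow_Suc)
  finally have eq_N: "f [^] N \<otimes> t = f [^] Suc N \<otimes> a" .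
  have "f [^] N \<otimes> t [^] N = f [^] N \<otimes> f [^] N \<otimes> a [^] N"
    using nat_pow_mult_shift[OF f t_R a eq_N, of N] f by (simp add: nat_pow_mult)
  then have "t [^] N \<ominus> f [^] N \<otimes> a [^] N \<in> ann R (f [^] N)"
    and "ann R (f [^] N) \<inter> ann R (t [^] N \<ominus> f [^] N \<otimes> a [^] N) = {\<zero>}"
    using ann_inter_ann_eq_zero[OF _ nzd_pow[OF t]] f a by simp_all
  moreover have "ann R (f [^] N) = ann R (f [^] (N + 1))"
    using ann_pow_eq_ann_Suc_pow[OF f t a eq_N] .
  moreover have "N \<ge> 1"
    by (simp add: N_def)
  ultimately show ?thesis
    by blast
qed

lemma nzd_pow_add_ann:
  fixes n :: nat
  assumes f: "f \<in> carrier R" and stable: "ann R (f [^] n) = ann R (f [^] (n + 1))"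
    and h: "h \<in> ann R (f [^] n)" and inter: "ann R (f [^] n) \<inter> ann R h = {\<zero>}"
  shows "f [^] n \<oplus> h \<in> nzd R" "f [^] n \<otimes> (f [^] n \<oplus> h) = f [^] (2 * n)"
proof -
  define F where "F = f [^] n"
  have F_R: "F \<in> carrier R" and h_R: "h \<in> carrier R" and hF: "h \<otimes> F = \<zero>"
    using f h by (auto simp: F_def ann_def)
  have FF: "F \<otimes> F = f [^] (2 * n)"
    using f by (simp add: F_def nat_pow_mult mult_2)
  show "f [^] n \<otimes> (f [^] n \<oplus> h) = f [^] (2 * n)"
    unfolding F_def[symmetric] FF[symmetric] using F_R h_R hF by (simp add: r_distr m_comm)
  have "y = \<zero>" if y: "y \<in> carrier R" "(F \<oplus> h) \<otimes> y = \<zero>" for y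
  proof -
    have "y \<otimes> (F \<otimes> F) = F \<otimes> ((F \<oplus> h) \<otimes> y) \<ominus> y \<otimes> (h \<otimes> F)"
      using y(1) F_R h_R by algebra
    then have "y \<in> ann R (f [^] (n + n))"
      using y F_R h_R hF f by (simp add: ann_def FF mult_2)
    then have yF: "y \<otimes> F = \<zero>"
      using ann_pow_add_subset[OF f stable] by (auto simp: ann_def F_def)
    have "y \<otimes> h = (F \<oplus> h) \<otimes> y \<ominus> y \<otimes> F"
      using y(1) F_R h_R by algebra
    then have "y \<otimes> h = \<zero>"
      using y yF by simp
    with y(1) yF have "y \<in> ann R (f [^] n) \<inter> ann R h"
      by (simp add: ann_def F_def)
    with inter show "y = \<zero>"
      by blast
  qed
  then show "f [^] n \<oplus> h \<in> nzd R"
    using F_R h_R unfolding nzd_def F_def by blast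
qed

end

section \<open>Zero-dimensional rings\<close>

definition strongly_pi_regular :: "('a, 'b) ring_scheme \<Rightarrow> bool" where
  "strongly_pi_regular R \<longleftrightarrow>
     (\<forall>x \<in> carrier R. \<exists>n::nat. \<exists>y \<in> carrier R. x [^]\<^bsub>R\<^esub> n = x [^]\<^bsub>R\<^esub> Suc n \<otimes>\<^bsub>R\<^esub> y)"

lemma (in primeideal) pow_notin:
  assumes "x \<in> carrier R" "x \<notin> I"
  shows "x [^] (n::nat) \<notin> I"
proof (induction n)
  case 0
  show ?case
    using I_notcarr one_imp_carrier by auto
next
  case (Suc n)
  then show ?case
    using I_prime[of "x [^] n" x] assms by auto
qed

context cring
begin

lemma nat_pow_mult_one_minus:
  assumes "x \<in> carrier R" "y \<in> carrier R"
  shows "x [^] (n::nat) \<otimes> (\<one> \<ominus> x \<otimes> y) = x [^] n \<ominus> x [^] Suc n \<otimes> y"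
  using assms by (simp add: a_minus_def r_distr r_minus m_assoc)

lemma strongly_pi_regular_imp_zero_dimensional:
  assumes "strongly_pi_regular R"
  shows "zero_dimensional R"
  unfolding zero_dimensional_def
proof (intro allI impI)
  fix P assume "primeideal P R"
  then interpret P: primeideal P R .
  show "maximalideal P R"
  proof (rule maximalidealI[OF P.is_ideal P.I_notcarr])
    fix J assume J: "ideal J R" "P \<subseteq> J" "J \<subseteq> carrier R"
    interpret J: ideal J R by (rule J(1))
    show "J = P \<or> J = carrier R"
    proof (cases "J = P")
      case False
      then obtain x where x: "x \<in> J" "x \<notin> P" "x \<in> carrier R"
        using J(2,3) by blast
      obtain n y where y: "y \<in> carrier R" "x [^] (n::nat) = x [^] Suc n \<otimes> y"
        using assms x(3) unfolding strongly_pi_regular_def by blast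
      have "x [^] n \<otimes> (\<one> \<ominus> x \<otimes> y) = x [^] n \<ominus> x [^] Suc n \<otimes> y"
        using x(3) y(1) by (rule nat_pow_mult_one_minus)
      also have "\<dots> = \<zero>"
        using x(3) y by simp
      finally have "x [^] n \<otimes> (\<one> \<ominus> x \<otimes> y) \<in> P"
        by simp
      then have "x [^] n \<in> P \<or> \<one> \<ominus> x \<otimes> y \<in> P"
        using x(3) y(1) by (intro P.I_prime) simp_all
      then have "\<one> \<ominus> x \<otimes> y \<in> J"
        using P.pow_notin[OF x(3,2)] J(2) by blast
      moreover have "x \<otimes> y \<in> J"
        using x(1) y(1) by (rule J.I_r_closed)
      ultimately have "\<one> \<ominus> x \<otimes> y \<oplus> x \<otimes> y \<in> J"
        by (rule J.a_closed)
      moreover have "\<one> \<ominus> x \<otimes> y \<oplus> x \<otimes> y = \<one>"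
        using x(3) y(1) by algebra
      ultimately show ?thesis
        using J.one_imp_carrier by simp
    qed simp
  qed
qed

lemma mem_set_add_PIdl_iff:
  assumes "M \<subseteq> carrier R" "a \<in> carrier R"
  shows "z \<in> M <+>\<^bsub>R\<^esub> PIdl a \<longleftrightarrow> (\<exists>m \<in> M. \<exists>r \<in> carrier R. z = m \<oplus> r \<otimes> a)"
  unfolding set_add_def' cgenideal_def by blast

lemma ideal_set_add_PIdl:
  assumes M: "ideal M R" and a: "a \<in> carrier R"
  shows "ideal (M <+>\<^bsub>R\<^esub> PIdl a) R" "M \<subseteq> M <+>\<^bsub>R\<^esub> PIdl a" "a \<in> M <+>\<^bsub>R\<^esub> PIdl a"
proof -
  interpret M: ideal M R by (rule M)
  show "ideal (M <+>\<^bsub>R\<^esub> PIdl a) R"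
    by (rule add_ideals[OF M cgenideal_ideal[OF a]])
  have "m = m \<oplus> \<zero> \<otimes> a" if "m \<in> M" for m
    using that a by simp
  then show "M \<subseteq> M <+>\<^bsub>R\<^esub> PIdl a"
    using mem_set_add_PIdl_iff[OF M.a_subset a] by blast
  have "a = \<zero> \<oplus> \<one> \<otimes> a"
    using a by simp
  then show "a \<in> M <+>\<^bsub>R\<^esub> PIdl a"
    using mem_set_add_PIdl_iff[OF M.a_subset a] M.zero_closed by blast
qed

lemma maximalideal_ex_inverse_mod:
  assumes M: "maximalideal M R" and x: "x \<in> carrier R" "x \<notin> M"
  obtains r where "r \<in> carrier R" "\<one> \<ominus> x \<otimes> r \<in> M"
proof -
  interpret M: maximalideal M R by (rule M)
  note sum = ideal_set_add_PIdl[OF M.is_ideal x(1)]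
  have "M <+>\<^bsub>R\<^esub> PIdl x = carrier R"
    using M.I_maximal[OF sum(1,2)] sum(3) x(2) ideal.Icarr[OF sum(1)] by blast
  then obtain m r where mr: "m \<in> M" "r \<in> carrier R" "\<one> = m \<oplus> r \<otimes> x"
    using mem_set_add_PIdl_iff[OF M.a_subset x(1)] one_closed by blast
  have "m \<in> carrier R"
    using M.a_subset mr(1) by blast
  then have "\<one> \<ominus> x \<otimes> r = m"
    unfolding mr(3) using mr(2) x(1) by algebra
  with mr(1,2) show ?thesis
    using that by simp
qed

lemma ex_primeideal_disjoint_multiplicative:
  assumes S: "S \<subseteq> carrier R" "\<one> \<in> S" "\<zero> \<notin> S"
    and mult_S: "\<And>a b. a \<in> S \<Longrightarrow> b \<in> S \<Longrightarrow> a \<otimes> b \<in> S"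
  obtains P where "primeideal P R" "P \<inter> S = {}"
proof -
  define F where "F = {I. ideal I R \<and> I \<inter> S = {}}"
  have "\<exists>M \<in> F. \<forall>I \<in> F. M \<subseteq> I \<longrightarrow> I = M"
  proof (rule subset_Zorn)
    fix C assume C: "subset.chain F C"
    define U where "U = (if C = {} then {\<zero>} else \<Union>C)"
    have "C \<subseteq> F"
      using C by (simp add: subset_chain_def)
    then have "subset.chain {I. ideal I R} C"
      using C unfolding subset_chain_def F_def by auto
    then have "ideal U R"
      unfolding U_def by (rule chain_Union_is_ideal)
    moreover have "U \<inter> S = {}"
      using \<open>C \<subseteq> F\<close> S(3) unfolding U_def F_def by auto
    moreover have "\<forall>I \<in> C. I \<subseteq> U"
      unfolding U_def by auto
    ultimately show "\<exists>U \<in> F. \<forall>I \<in> C. I \<subseteq> U"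
      unfolding F_def by blast
  qed
  then obtain M where M: "ideal M R" "M \<inter> S = {}"
    and M_max: "\<And>I. ideal I R \<Longrightarrow> I \<inter> S = {} \<Longrightarrow> M \<subseteq> I \<Longrightarrow> I = M"
    unfolding F_def by auto
  interpret M: ideal M R by (rule M(1))
  have meets_S: "\<exists>m \<in> M. \<exists>r \<in> carrier R. m \<oplus> r \<otimes> a \<in> S" if a: "a \<in> carrier R" "a \<notin> M" for a
  proof -
    note sum = ideal_set_add_PIdl[OF M(1) a(1)]
    have "M <+>\<^bsub>R\<^esub> PIdl a \<noteq> M"
      using sum(3) a(2) by auto
    then have "(M <+>\<^bsub>R\<^esub> PIdl a) \<inter> S \<noteq> {}"
      using M_max[OF sum(1) _ sum(2)] by auto
    then obtain z where "z \<in> M <+>\<^bsub>R\<^esub> PIdl a" "z \<in> S"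
      by auto
    then show ?thesis
      unfolding mem_set_add_PIdl_iff[OF M.a_subset a(1)] by auto
  qed
  have "primeideal M R"
  proof (rule primeidealI[OF M(1) is_cring])
    show "carrier R \<noteq> M"
      using M(2) S(2) by auto
    fix a b assume ab: "a \<in> carrier R" "b \<in> carrier R" "a \<otimes> b \<in> M"
    show "a \<in> M \<or> b \<in> M"
    proof (rule ccontr)
      assume "\<not> (a \<in> M \<or> b \<in> M)"
      then obtain m1 r1 m2 r2 where m: "m1 \<in> M" "m2 \<in> M" and r: "r1 \<in> carrier R" "r2 \<in> carrier R"
        and in_S: "m1 \<oplus> r1 \<otimes> a \<in> S" "m2 \<oplus> r2 \<otimes> b \<in> S"
        using meets_S[of a] meets_S[of b] ab(1,2) by auto
      have m_R: "m1 \<in> carrier R" "m2 \<in> carrier R"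
        using m M.a_subset by auto
      have "(m1 \<oplus> r1 \<otimes> a) \<otimes> (m2 \<oplus> r2 \<otimes> b) =
          m1 \<otimes> (m2 \<oplus> r2 \<otimes> b) \<oplus> (m2 \<otimes> (r1 \<otimes> a) \<oplus> (r1 \<otimes> r2) \<otimes> (a \<otimes> b))"
        using m_R r ab(1,2) by algebra
      also have "\<dots> \<in> M"
        using m m_R r ab by (simp add: M.a_closed M.I_r_closed M.I_l_closed)
      finally have "(m1 \<oplus> r1 \<otimes> a) \<otimes> (m2 \<oplus> r2 \<otimes> b) \<in> M \<inter> S"
        using mult_S[OF in_S] by simp
      with M(2) show False
        by simp
    qed
  qed
  then show ?thesis
    using M(2) by (rule that)
qed

lemma nat_pow_mult_one_minus_mult:
  assumes x: "x \<in> carrier R" and "y \<in> carrier R" "z \<in> carrier R"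
  shows "(x [^] (m::nat) \<otimes> (\<one> \<ominus> x \<otimes> y)) \<otimes> (x [^] (n::nat) \<otimes> (\<one> \<ominus> x \<otimes> z)) =
    x [^] (m + n) \<otimes> (\<one> \<ominus> x \<otimes> (y \<oplus> z \<ominus> x \<otimes> y \<otimes> z))"
proof -
  have "(x [^] m \<otimes> (\<one> \<ominus> x \<otimes> y)) \<otimes> (x [^] n \<otimes> (\<one> \<ominus> x \<otimes> z)) =
      (x [^] m \<otimes> x [^] n) \<otimes> (\<one> \<ominus> x \<otimes> (y \<oplus> z \<ominus> x \<otimes> y \<otimes> z))"
    using assms nat_pow_closed[OF x, of m] nat_pow_closed[OF x, of n] by algebra
  then show ?thesis
    using x by (simp add: nat_pow_mult)
qed

lemma ex_primeideal_not_invertible_mod: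
  assumes x: "x \<in> carrier R"
    and not_regular: "\<And>n y. y \<in> carrier R \<Longrightarrow> x [^] (n::nat) \<noteq> x [^] Suc n \<otimes> y"
  obtains P where "primeideal P R" "x \<notin> P" "\<And>r. r \<in> carrier R \<Longrightarrow> \<one> \<ominus> x \<otimes> r \<notin> P"
proof -
  define S where "S = {x [^] (n::nat) \<otimes> (\<one> \<ominus> x \<otimes> y) | n y. y \<in> carrier R}"
  have one_minus_in_S: "\<one> \<ominus> x \<otimes> y \<in> S" if "y \<in> carrier R" for y
  proof -
    have "\<one> \<ominus> x \<otimes> y = x [^] (0::nat) \<otimes> (\<one> \<ominus> x \<otimes> y)"
      using that x by simp
    then show ?thesis
      unfolding S_def using that by blast
  qed
  have "x = x [^] (1::nat) \<otimes> (\<one> \<ominus> x \<otimes> \<zero>)"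
    using x by (simp add: a_minus_def)
  then have x_in_S: "x \<in> S"
    unfolding S_def by blast
  have "S \<subseteq> carrier R"
    unfolding S_def using x by auto
  moreover have "\<one> \<in> S"
    using one_minus_in_S[of \<zero>] x by (simp add: a_minus_def)
  moreover have "\<zero> \<notin> S"
  proof
    assume "\<zero> \<in> S"
    then obtain n y where "y \<in> carrier R" "x [^] (n::nat) \<otimes> (\<one> \<ominus> x \<otimes> y) = \<zero>"
      unfolding S_def by auto
    with not_regular show False
      using x by (simp add: nat_pow_mult_one_minus del: nat_pow_Suc)
  qed
  moreover have "a \<otimes> b \<in> S" if "a \<in> S" "b \<in> S" for a b
  proof -
    obtain m y where y: "y \<in> carrier R" and a: "a = x [^] (m::nat) \<otimes> (\<one> \<ominus> x \<otimes> y)"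
      using \<open>a \<in> S\<close> unfolding S_def by blast
    obtain n z where z: "z \<in> carrier R" and b: "b = x [^] (n::nat) \<otimes> (\<one> \<ominus> x \<otimes> z)"
      using \<open>b \<in> S\<close> unfolding S_def by blast
    have "a \<otimes> b = x [^] (m + n) \<otimes> (\<one> \<ominus> x \<otimes> (y \<oplus> z \<ominus> x \<otimes> y \<otimes> z))"
      unfolding a b using x y z by (rule nat_pow_mult_one_minus_mult)
    moreover have "y \<oplus> z \<ominus> x \<otimes> y \<otimes> z \<in> carrier R"
      using x y z by simp
    ultimately show ?thesis
      unfolding S_def by blast
  qed
  ultimately obtain P where P: "primeideal P R" "P \<inter> S = {}"
    by (rule ex_primeideal_disjoint_multiplicative)
  moreover have "x \<notin> P"
    using x_in_S P(2) by blast
  moreover have "\<one> \<ominus> x \<otimes> r \<notin> P" if "r \<in> carrier R" for r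
    using one_minus_in_S[OF that] P(2) by blast
  ultimately show ?thesis
    using that by blast
qed

lemma zero_dimensional_imp_strongly_pi_regular:
  assumes "zero_dimensional R"
  shows "strongly_pi_regular R"
  unfolding strongly_pi_regular_def
proof (intro ballI, rule ccontr)
  fix x assume x: "x \<in> carrier R"
  assume "\<not> (\<exists>n::nat. \<exists>y \<in> carrier R. x [^] n = x [^] Suc n \<otimes> y)"
  then obtain P where P: "primeideal P R" "x \<notin> P" "\<And>r. r \<in> carrier R \<Longrightarrow> \<one> \<ominus> x \<otimes> r \<notin> P"
    using ex_primeideal_not_invertible_mod[OF x] by blast
  then have "maximalideal P R"
    using assms unfolding zero_dimensional_def by blast
  then obtain r where "r \<in> carrier R" "\<one> \<ominus> x \<otimes> r \<in> P"
    using maximalideal_ex_inverse_mod x P(2) by blast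
  with P(3) show False
    by blast
qed

lemma zero_dimensional_iff_strongly_pi_regular:
  "zero_dimensional R \<longleftrightarrow> strongly_pi_regular R"
  using zero_dimensional_imp_strongly_pi_regular strongly_pi_regular_imp_zero_dimensional by blast

end

section \<open>The total ring of fractions\<close>

definition fraction :: "('a, 'b) ring_scheme \<Rightarrow> 'a \<Rightarrow> 'a \<Rightarrow> ('a \<times> 'a) set" where
  "fraction R a s = frac_rel R `` {(a, s)}"

context cring
begin

abbreviation T where "T \<equiv> total_frac_ring R"

lemma frac_rel_iff:
  "((a, s), (b, t)) \<in> frac_rel R \<longleftrightarrow>
     a \<in> carrier R \<and> s \<in> nzd R \<and> b \<in> carrier R \<and> t \<in> nzd R \<and> a \<otimes> t = b \<otimes> s"
proof -
  have key: "(\<exists>u \<in> nzd R. u \<otimes> (a \<otimes> t \<ominus> b \<otimes> s) = \<zero>) \<longleftrightarrow> a \<otimes> t = b \<otimes> s"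
    if in_R: "a \<in> carrier R" "s \<in> nzd R" "b \<in> carrier R" "t \<in> nzd R"
  proof
    assume "\<exists>u \<in> nzd R. u \<otimes> (a \<otimes> t \<ominus> b \<otimes> s) = \<zero>"
    then obtain u where u: "u \<in> nzd R" "u \<otimes> (a \<otimes> t \<ominus> b \<otimes> s) = \<zero>" ..
    have "a \<otimes> t \<ominus> b \<otimes> s = \<zero>"
      by (rule nzd_cancel[OF u(1) _ u(2)]) (use in_R nzd_closed in simp)
    then show "a \<otimes> t = b \<otimes> s"
      using in_R nzd_closed by simp
  next
    assume "a \<otimes> t = b \<otimes> s"
    then show "\<exists>u \<in> nzd R. u \<otimes> (a \<otimes> t \<ominus> b \<otimes> s) = \<zero>"
      using in_R nzd_one nzd_closed by (intro bexI[of _ \<one>]) simp_all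
  qed
  have "((a, s), (b, t)) \<in> frac_rel R \<longleftrightarrow> a \<in> carrier R \<and> s \<in> nzd R \<and> b \<in> carrier R \<and> t \<in> nzd R \<and>
      (\<exists>u \<in> nzd R. u \<otimes> (a \<otimes> t \<ominus> b \<otimes> s) = \<zero>)"
    by (simp add: frac_rel_def)
  with key show ?thesis
    by blast
qed

lemma frac_rel_equiv: "equiv (carrier R \<times> nzd R) (frac_rel R)"
proof (rule equivI)
  show "frac_rel R \<subseteq> (carrier R \<times> nzd R) \<times> (carrier R \<times> nzd R)"
    by (auto simp: frac_rel_def)
  show "refl_on (carrier R \<times> nzd R) (frac_rel R)"
    by (auto intro!: refl_onI simp: frac_rel_iff)
  show "sym (frac_rel R)"
    by (auto intro!: symI simp: frac_rel_iff)
  show "trans (frac_rel R)"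
  proof (rule transI, clarify)
    fix a s b t c v
    assume "((a, s), (b, t)) \<in> frac_rel R" "((b, t), (c, v)) \<in> frac_rel R"
    then have in_R: "a \<in> carrier R" "b \<in> carrier R" "c \<in> carrier R"
        "s \<in> carrier R" "t \<in> carrier R" "v \<in> carrier R" "s \<in> nzd R" "t \<in> nzd R" "v \<in> nzd R"
      and ab: "a \<otimes> t = b \<otimes> s" and bc: "b \<otimes> v = c \<otimes> t"
      by (auto simp: frac_rel_iff nzd_closed)
    have "t \<otimes> (a \<otimes> v) = (a \<otimes> t) \<otimes> v" using in_R by (simp add: m_ac)
    also have "\<dots> = (b \<otimes> v) \<otimes> s" unfolding ab using in_R by (simp add: m_ac)
    also have "\<dots> = t \<otimes> (c \<otimes> s)" unfolding bc using in_R by (simp add: m_ac)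
    finally show "((a, s), (c, v)) \<in> frac_rel R"
      using in_R by (simp add: frac_rel_iff nzd_mult_cancel)
  qed
qed

lemma fraction_eq_iff:
  assumes "a \<in> carrier R" "s \<in> nzd R" "b \<in> carrier R" "t \<in> nzd R"
  shows "fraction R a s = fraction R b t \<longleftrightarrow> a \<otimes> t = b \<otimes> s"
  using eq_equiv_class_iff[OF frac_rel_equiv] assms by (simp add: fraction_def frac_rel_iff)

lemma carrier_total_frac_ring: "carrier T = {fraction R a s | a s. a \<in> carrier R \<and> s \<in> nzd R}"
  by (auto simp: total_frac_ring_def quotient_def fraction_def)

lemma total_frac_ring_carrierE:
  assumes "x \<in> carrier T"
  obtains a s where "a \<in> carrier R" "s \<in> nzd R" "x = fraction R a s"
  using assms by (auto simp: carrier_total_frac_ring)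

lemma fraction_closed: "a \<in> carrier R \<Longrightarrow> s \<in> nzd R \<Longrightarrow> fraction R a s \<in> carrier T"
  by (auto simp: carrier_total_frac_ring)

lemma mult_total_frac_ring: "x \<otimes>\<^bsub>T\<^esub> y = frac_mult R x y"
  by (simp add: total_frac_ring_def)

lemma add_total_frac_ring: "x \<oplus>\<^bsub>T\<^esub> y = frac_add R x y"
  by (simp add: total_frac_ring_def)

lemma one_total_frac_ring: "\<one>\<^bsub>T\<^esub> = fraction R \<one> \<one>"
  by (simp add: total_frac_ring_def fraction_def)

lemma zero_total_frac_ring: "\<zero>\<^bsub>T\<^esub> = fraction R \<zero> \<one>"
  by (simp add: total_frac_ring_def fraction_def)

lemma UN_fraction_eq:
  assumes "F respects2 frac_rel R"
    and "a \<in> carrier R" "s \<in> nzd R" "b \<in> carrier R" "t \<in> nzd R"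
  shows "(\<Union>x \<in> fraction R a s. \<Union>y \<in> fraction R b t. F x y) = F (a, s) (b, t)"
  unfolding fraction_def using assms by (simp add: UN_equiv_class2[OF frac_rel_equiv frac_rel_equiv])

lemma mult_fraction:
  assumes "a \<in> carrier R" "s \<in> nzd R" "b \<in> carrier R" "t \<in> nzd R"
  shows "fraction R a s \<otimes>\<^bsub>T\<^esub> fraction R b t = fraction R (a \<otimes> b) (s \<otimes> t)"
proof -
  have "(\<lambda>x y. fraction R (fst x \<otimes> fst y) (snd x \<otimes> snd y)) respects2 frac_rel R"
  proof (rule congruent2I', clarsimp)
    fix a s a' s' b t b' t'
    assume "((a, s), (a', s')) \<in> frac_rel R" "((b, t), (b', t')) \<in> frac_rel R"
    then have in_R: "a \<in> carrier R" "a' \<in> carrier R" "b \<in> carrier R" "b' \<in> carrier R"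
        "s \<in> carrier R" "s' \<in> carrier R" "t \<in> carrier R" "t' \<in> carrier R"
        "s \<in> nzd R" "s' \<in> nzd R" "t \<in> nzd R" "t' \<in> nzd R"
      and a: "a \<otimes> s' = a' \<otimes> s" and b: "b \<otimes> t' = b' \<otimes> t"
      by (auto simp: frac_rel_iff nzd_closed)
    have "(a \<otimes> b) \<otimes> (s' \<otimes> t') = (a \<otimes> s') \<otimes> (b \<otimes> t')"
      using in_R by (simp add: m_ac)
    also have "\<dots> = (a' \<otimes> b') \<otimes> (s \<otimes> t)"
      using in_R by (simp add: a b m_ac)
    finally show "fraction R (a \<otimes> b) (s \<otimes> t) = fraction R (a' \<otimes> b') (s' \<otimes> t')"
      using in_R by (simp add: fraction_eq_iff nzd_mult)
  qed
  then show ?thesis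
    unfolding mult_total_frac_ring frac_mult_def fraction_def[symmetric]
    using assms by (simp add: UN_fraction_eq)
qed

lemma add_fraction:
  assumes "a \<in> carrier R" "s \<in> nzd R" "b \<in> carrier R" "t \<in> nzd R"
  shows "fraction R a s \<oplus>\<^bsub>T\<^esub> fraction R b t = fraction R (a \<otimes> t \<oplus> b \<otimes> s) (s \<otimes> t)"
proof -
  have "(\<lambda>x y. fraction R (fst x \<otimes> snd y \<oplus> fst y \<otimes> snd x) (snd x \<otimes> snd y)) respects2 frac_rel R"
  proof (rule congruent2I', clarsimp)
    fix a s a' s' b t b' t'
    assume "((a, s), (a', s')) \<in> frac_rel R" "((b, t), (b', t')) \<in> frac_rel R"
    then have in_R: "a \<in> carrier R" "a' \<in> carrier R" "b \<in> carrier R" "b' \<in> carrier R"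
        "s \<in> carrier R" "s' \<in> carrier R" "t \<in> carrier R" "t' \<in> carrier R"
        "s \<in> nzd R" "s' \<in> nzd R" "t \<in> nzd R" "t' \<in> nzd R"
      and a: "a \<otimes> s' = a' \<otimes> s" and b: "b \<otimes> t' = b' \<otimes> t"
      by (auto simp: frac_rel_iff nzd_closed)
    have "(a \<otimes> t \<oplus> b \<otimes> s) \<otimes> (s' \<otimes> t') = (a \<otimes> s') \<otimes> (t \<otimes> t') \<oplus> (b \<otimes> t') \<otimes> (s \<otimes> s')"
      using in_R by algebra
    also have "\<dots> = (a' \<otimes> s) \<otimes> (t \<otimes> t') \<oplus> (b' \<otimes> t) \<otimes> (s \<otimes> s')"
      by (simp only: a b)
    also have "\<dots> = (a' \<otimes> t' \<oplus> b' \<otimes> s') \<otimes> (s \<otimes> t)"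
      using in_R by algebra
    finally show "fraction R (a \<otimes> t \<oplus> b \<otimes> s) (s \<otimes> t) = fraction R (a' \<otimes> t' \<oplus> b' \<otimes> s') (s' \<otimes> t')"
      using in_R by (subst fraction_eq_iff) (simp_all add: nzd_mult)
  qed
  then show ?thesis
    unfolding add_total_frac_ring frac_add_def fraction_def[symmetric]
    using assms by (simp add: UN_fraction_eq)
qed

lemma cring_total_frac_ring: "cring T"
proof (rule cringI)
  show "abelian_group T"
  proof (rule abelian_groupI)
    fix x y assume "x \<in> carrier T" "y \<in> carrier T"
    then show "x \<oplus>\<^bsub>T\<^esub> y \<in> carrier T"
      by (elim total_frac_ring_carrierE) (auto simp: add_fraction nzd_mult nzd_closed intro!: fraction_closed)
  next
    show "\<zero>\<^bsub>T\<^esub> \<in> carrier T"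
      by (simp add: zero_total_frac_ring fraction_closed nzd_one)
  next
    fix x y z assume "x \<in> carrier T" "y \<in> carrier T" "z \<in> carrier T"
    then obtain a s b t c v where in_R: "a \<in> carrier R" "b \<in> carrier R" "c \<in> carrier R"
        "s \<in> nzd R" "t \<in> nzd R" "v \<in> nzd R"
      and xyz: "x = fraction R a s" "y = fraction R b t" "z = fraction R c v"
      by (elim total_frac_ring_carrierE) metis
    have "(a \<otimes> t \<oplus> b \<otimes> s) \<otimes> v \<oplus> c \<otimes> (s \<otimes> t) = a \<otimes> (t \<otimes> v) \<oplus> (b \<otimes> v \<oplus> c \<otimes> t) \<otimes> s"
      "s \<otimes> t \<otimes> v = s \<otimes> (t \<otimes> v)"
      using in_R nzd_closed by algebra+
    then show "x \<oplus>\<^bsub>T\<^esub> y \<oplus>\<^bsub>T\<^esub> z = x \<oplus>\<^bsub>T\<^esub> (y \<oplus>\<^bsub>T\<^esub> z)"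
      unfolding xyz using in_R by (simp add: add_fraction nzd_mult nzd_closed)
  next
    fix x y assume "x \<in> carrier T" "y \<in> carrier T"
    then obtain a s b t where in_R: "a \<in> carrier R" "b \<in> carrier R" "s \<in> nzd R" "t \<in> nzd R"
      and xy: "x = fraction R a s" "y = fraction R b t"
      by (elim total_frac_ring_carrierE) metis
    have "a \<otimes> t \<oplus> b \<otimes> s = b \<otimes> s \<oplus> a \<otimes> t" "s \<otimes> t = t \<otimes> s"
      using in_R nzd_closed by algebra+
    then show "x \<oplus>\<^bsub>T\<^esub> y = y \<oplus>\<^bsub>T\<^esub> x"
      unfolding xy using in_R by (simp add: add_fraction)
  next
    fix x assume "x \<in> carrier T"
    then show "\<zero>\<^bsub>T\<^esub> \<oplus>\<^bsub>T\<^esub> x = x"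
      by (elim total_frac_ring_carrierE) (simp add: zero_total_frac_ring add_fraction nzd_one nzd_closed)
  next
    fix x assume "x \<in> carrier T"
    then obtain a s where in_R: "a \<in> carrier R" "s \<in> nzd R" and x: "x = fraction R a s"
      by (elim total_frac_ring_carrierE)
    have "fraction R (\<ominus> a) s \<oplus>\<^bsub>T\<^esub> x = \<zero>\<^bsub>T\<^esub>"
      unfolding x using in_R nzd_closed
      by (simp add: add_fraction zero_total_frac_ring fraction_eq_iff nzd_mult nzd_one l_minus l_neg)
    moreover have "fraction R (\<ominus> a) s \<in> carrier T"
      using in_R by (simp add: fraction_closed)
    ultimately show "\<exists>y \<in> carrier T. y \<oplus>\<^bsub>T\<^esub> x = \<zero>\<^bsub>T\<^esub>"
      by blast
  qed
next
  show "comm_monoid T"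
  proof (rule comm_monoidI)
    fix x y assume "x \<in> carrier T" "y \<in> carrier T"
    then show "x \<otimes>\<^bsub>T\<^esub> y \<in> carrier T"
      by (elim total_frac_ring_carrierE) (auto simp: mult_fraction nzd_mult intro!: fraction_closed)
  next
    show "\<one>\<^bsub>T\<^esub> \<in> carrier T"
      by (simp add: one_total_frac_ring fraction_closed nzd_one)
  next
    fix x y z assume "x \<in> carrier T" "y \<in> carrier T" "z \<in> carrier T"
    then show "x \<otimes>\<^bsub>T\<^esub> y \<otimes>\<^bsub>T\<^esub> z = x \<otimes>\<^bsub>T\<^esub> (y \<otimes>\<^bsub>T\<^esub> z)"
      by (elim total_frac_ring_carrierE) (simp add: mult_fraction nzd_mult nzd_closed m_assoc)
  next
    fix x assume "x \<in> carrier T"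
    then show "\<one>\<^bsub>T\<^esub> \<otimes>\<^bsub>T\<^esub> x = x"
      by (elim total_frac_ring_carrierE) (simp add: one_total_frac_ring mult_fraction nzd_one nzd_closed)
  next
    fix x y assume "x \<in> carrier T" "y \<in> carrier T"
    then show "x \<otimes>\<^bsub>T\<^esub> y = y \<otimes>\<^bsub>T\<^esub> x"
      by (elim total_frac_ring_carrierE) (simp add: mult_fraction nzd_closed m_comm)
  qed
next
  fix x y z assume "x \<in> carrier T" "y \<in> carrier T" "z \<in> carrier T"
  then obtain a s b t c v where in_R: "a \<in> carrier R" "b \<in> carrier R" "c \<in> carrier R"
      "s \<in> nzd R" "t \<in> nzd R" "v \<in> nzd R"
    and xyz: "x = fraction R a s" "y = fraction R b t" "z = fraction R c v"
    by (elim total_frac_ring_carrierE) metis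
  have "(a \<otimes> t \<oplus> b \<otimes> s) \<otimes> c \<otimes> (s \<otimes> v \<otimes> (t \<otimes> v))
      = (a \<otimes> c \<otimes> (t \<otimes> v) \<oplus> b \<otimes> c \<otimes> (s \<otimes> v)) \<otimes> (s \<otimes> t \<otimes> v)"
    using in_R nzd_closed by algebra
  then show "(x \<oplus>\<^bsub>T\<^esub> y) \<otimes>\<^bsub>T\<^esub> z = x \<otimes>\<^bsub>T\<^esub> z \<oplus>\<^bsub>T\<^esub> y \<otimes>\<^bsub>T\<^esub> z"
    unfolding xyz using in_R nzd_closed by (simp add: add_fraction mult_fraction nzd_mult fraction_eq_iff)
qed

lemma pow_fraction:
  assumes "a \<in> carrier R" "s \<in> nzd R"
  shows "fraction R a s [^]\<^bsub>T\<^esub> (n::nat) = fraction R (a [^] n) (s [^] n)"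
  by (induction n) (simp_all add: assms one_total_frac_ring mult_fraction nzd_pow)

lemma strongly_pi_regular_total_frac_ring_iff:
  "strongly_pi_regular T \<longleftrightarrow>
     (\<forall>f \<in> carrier R. \<exists>n::nat. \<exists>t \<in> nzd R. \<exists>a \<in> carrier R. f [^] n \<otimes> t = f [^] Suc n \<otimes> a)"
proof
  assume regular: "strongly_pi_regular T"
  show "\<forall>f \<in> carrier R. \<exists>n::nat. \<exists>t \<in> nzd R. \<exists>a \<in> carrier R. f [^] n \<otimes> t = f [^] Suc n \<otimes> a"
  proof
    fix f assume f: "f \<in> carrier R"
    then obtain n y where y: "y \<in> carrier T"
      and "fraction R f \<one> [^]\<^bsub>T\<^esub> (n::nat) = fraction R f \<one> [^]\<^bsub>T\<^esub> Suc n \<otimes>\<^bsub>T\<^esub> y"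
      using regular fraction_closed[OF f nzd_one] unfolding strongly_pi_regular_def by blast
    moreover obtain a t where a: "a \<in> carrier R" and t: "t \<in> nzd R" and "y = fraction R a t"
      using y by (rule total_frac_ring_carrierE)
    ultimately have "fraction R (f [^] n) \<one> = fraction R (f [^] Suc n \<otimes> a) t"
      using f nzd_closed by (simp add: pow_fraction mult_fraction nzd_one del: nat_pow_Suc)
    then have "f [^] n \<otimes> t = f [^] Suc n \<otimes> a"
      using f a t nzd_closed by (simp add: fraction_eq_iff nzd_one del: nat_pow_Suc)
    with a t show "\<exists>n::nat. \<exists>t \<in> nzd R. \<exists>a \<in> carrier R. f [^] n \<otimes> t = f [^] Suc n \<otimes> a"
      by blast
  qed
next
  assume regular: "\<forall>f \<in> carrier R. \<exists>n::nat. \<exists>t \<in> nzd R. \<exists>a \<in> carrier R. f [^] n \<otimes> t = f [^] Suc n \<otimes> a"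
  show "strongly_pi_regular T"
    unfolding strongly_pi_regular_def
  proof
    fix x assume "x \<in> carrier T"
    then obtain f s where f: "f \<in> carrier R" and s: "s \<in> nzd R" and x: "x = fraction R f s"
      by (rule total_frac_ring_carrierE)
    then obtain n t a where t: "t \<in> nzd R" and a: "a \<in> carrier R"
      and fta: "f [^] (n::nat) \<otimes> t = f [^] Suc n \<otimes> a"
      using regular by blast
    have s_R: "s \<in> carrier R" and t_R: "t \<in> carrier R"
      using s t by (simp_all add: nzd_closed)
    have "(f [^] Suc n \<otimes> (s \<otimes> a)) \<otimes> s [^] n = (f [^] Suc n \<otimes> a) \<otimes> s [^] Suc n"
      using f s_R a by (simp add: m_ac)
    also have "\<dots> = f [^] n \<otimes> (s [^] Suc n \<otimes> t)"
      unfolding fta[symmetric] using f s_R t_R by (simp add: m_ac del: nat_pow_Suc)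
    finally have "x [^]\<^bsub>T\<^esub> n = x [^]\<^bsub>T\<^esub> Suc n \<otimes>\<^bsub>T\<^esub> fraction R (s \<otimes> a) t"
      unfolding x using f s a t s_R by (simp add: pow_fraction mult_fraction fraction_eq_iff nzd_pow nzd_mult del: nat_pow_Suc)
    moreover have "fraction R (s \<otimes> a) t \<in> carrier T"
      using s_R a t by (simp add: fraction_closed)
    ultimately show "\<exists>n::nat. \<exists>y \<in> carrier T. x [^]\<^bsub>T\<^esub> n = x [^]\<^bsub>T\<^esub> Suc n \<otimes>\<^bsub>T\<^esub> y"
      by blast
  qed
qed

end

theorem lemma3p2:
  fixes R :: "('a, 'b) ring_scheme"
  assumes "cring R"
  defines "c1 \<equiv> zero_dimensional (total_frac_ring R)"
      and "c2 \<equiv> (\<forall>f \<in> carrier R. \<exists>n::nat. n \<ge> 1 \<and>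
                    ann R (f [^]\<^bsub>R\<^esub> n) = ann R (f [^]\<^bsub>R\<^esub> (n + 1)) \<and>
                    (\<exists>h \<in> ann R (f [^]\<^bsub>R\<^esub> n). ann R (f [^]\<^bsub>R\<^esub> n) \<inter> ann R h = {\<zero>\<^bsub>R\<^esub>}))"
      and "c3 \<equiv> (\<forall>f \<in> carrier R. \<exists>n::nat. n \<ge> 1 \<and>
                    (\<exists>g \<in> nzd R. f [^]\<^bsub>R\<^esub> n \<otimes>\<^bsub>R\<^esub> g = f [^]\<^bsub>R\<^esub> (2 * n)))"
  shows "(c1 \<longleftrightarrow> c2) \<and> (c2 \<longleftrightarrow> c3)"
proof -
  interpret cring R by fact
  let ?regular = "\<forall>f \<in> carrier R. \<exists>n::nat. \<exists>t \<in> nzd R. \<exists>a \<in> carrier R.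
    f [^]\<^bsub>R\<^esub> n \<otimes>\<^bsub>R\<^esub> t = f [^]\<^bsub>R\<^esub> Suc n \<otimes>\<^bsub>R\<^esub> a"
  have "c1 \<longleftrightarrow> ?regular"
    unfolding c1_def cring.zero_dimensional_iff_strongly_pi_regular[OF cring_total_frac_ring]
    by (rule strongly_pi_regular_total_frac_ring_iff)
  moreover have "?regular \<Longrightarrow> c2"
    unfolding c2_def using ann_pow_stable_complement by meson
  moreover have "c2 \<Longrightarrow> c3"
    unfolding c2_def c3_def using nzd_pow_add_ann by meson
  moreover have "c3 \<Longrightarrow> ?regular"
    unfolding c3_def using nat_pow_double_split nat_pow_closed by metis
  ultimately show ?thesis
    by blast
qed

end
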